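(* Let $(\mathcal{A},\cdot)$ be a commutative associative algebra with an algebra endomorphism $\alpha$ and a derivation $D$ such that $D\alpha=\alpha D$. For any fixed $\lambda\in\mathbb{C}$, define $x\circ y=\alpha(x\cdot D(y))+\lambda\,\alpha(x\cdot y)$ and $[x,y]^-=\alpha(x\cdot D(y))-\alpha(y\cdot D(x))$ for $x,y\in\mathcal{A}$. Then $(\mathcal{A},[\cdot,\cdot]^-,\circ,\alpha)$ is a Hom Gel'fand-Dorfman bialgebra.
   Context: All vector spaces are over $\mathbb{C}$. A derivation of $(\mathcal{A},\cdot)$ is a linear map $D$ with $D(x\cdot y)=D(x)\cdot y+x\cdot D(y)$. A Hom-Novikov algebra is a vector space with a bilinear operation $\circ$ and a linear endomorphism $\alpha$ such that $(x\circ y)\circ\alpha(z)-\alpha(x)\circ(y\circ z)=(y\circ x)\circ\alpha(z)-\alpha(y)\circ(x\circ z)$ and $(x\circ y)\circ\alpha(z)=(x\circ z)\circ\alpha(y)$ for all $x,y,z$. A Hom-Lie algebra is a vector space with a bilinear map $[\cdot,\cdot]$ and linear map $\alpha$ with $[x,y]=-[y,x]$ and $[[x,y],\alpha(z)]+[[y,z],\alpha(x)]+[[z,x],\alpha(y)]=0$. A Hom Gel'fand-Dorfman bialgebra is a vector space $\mathcal{A}$ with a linear endomorphism $\alpha$ and two bilinear operations $[\cdot,\cdot],\circ$ such that $(\mathcal{A},[\cdot,\cdot],\alpha)$ is a Hom-Lie algebra, $(\mathcal{A},\circ,\alpha)$ is a Hom-Novikov algebra, and $[x\circ y,\alpha(z)]-[x\circ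 z,\alpha(y)]+[x,y]\circ\alpha(z)-[x,z]\circ\alpha(y)-\alpha(x)\circ[y,z]=0$ for all $x,y,z$. *)

theory Defs
  imports Main "HOL.Complex"
begin

text \<open>A complex vector space is a carrier type 'a::ab_group_add with a scalar
multiplication sm :: complex => 'a => 'a satisfying vector_space sm; linearity is
Vector_Spaces.linear sm sm.\<close>

definition bilinear_op :: "(complex \<Rightarrow> 'a::ab_group_add \<Rightarrow> 'a) \<Rightarrow> ('a \<Rightarrow> 'a \<Rightarrow> 'a) \<Rightarrow> bool" where
  "bilinear_op sm m \<longleftrightarrow> (\<forall>x. Vector_Spaces.linear sm sm (m x)) \<and> (\<forall>y. Vector_Spaces.linear sm sm (\<lambda>x. m x y))"

definition comm_assoc_algebra :: "(complex \<Rightarrow> 'a::ab_group_add \<Rightarrow> 'a) \<Rightarrow> ('a \<Rightarrow> 'a \<Rightarrow> 'a) \<Rightarrow> bool" where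
  "comm_assoc_algebra sm m \<longleftrightarrow> bilinear_op sm m \<and> (\<forall>x y. m x y = m y x)
     \<and> (\<forall>x y z. m (m x y) z = m x (m y z))"

definition algebra_endomorphism :: "(complex \<Rightarrow> 'a::ab_group_add \<Rightarrow> 'a) \<Rightarrow> ('a \<Rightarrow> 'a \<Rightarrow> 'a) \<Rightarrow> ('a \<Rightarrow> 'a) \<Rightarrow> bool" where
  "algebra_endomorphism sm m \<alpha> \<longleftrightarrow> Vector_Spaces.linear sm sm \<alpha> \<and> (\<forall>x y. \<alpha> (m x y) = m (\<alpha> x) (\<alpha> y))"

definition derivation :: "(complex \<Rightarrow> 'a::ab_group_add \<Rightarrow> 'a) \<Rightarrow> ('a \<Rightarrow> 'a \<Rightarrow> 'a) \<Rightarrow> ('a \<Rightarrow> 'a) \<Rightarrow> bool" where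
  "derivation sm m D \<longleftrightarrow> Vector_Spaces.linear sm sm D \<and> (\<forall>x y. D (m x y) = m (D x) y + m x (D y))"

definition hom_novikov :: "(complex \<Rightarrow> 'a::ab_group_add \<Rightarrow> 'a) \<Rightarrow> ('a \<Rightarrow> 'a \<Rightarrow> 'a) \<Rightarrow> ('a \<Rightarrow> 'a) \<Rightarrow> bool" where
  "hom_novikov sm c \<alpha> \<longleftrightarrow> bilinear_op sm c \<and> Vector_Spaces.linear sm sm \<alpha> \<and>
     (\<forall>x y z. c (c x y) (\<alpha> z) - c (\<alpha> x) (c y z) = c (c y x) (\<alpha> z) - c (\<alpha> y) (c x z)) \<and>
     (\<forall>x y z. c (c x y) (\<alpha> z) = c (c x z) (\<alpha> y))"

definition hom_lie :: "(complex \<Rightarrow> 'a::ab_group_add \<Rightarrow> 'a) \<Rightarrow> ('a \<Rightarrow> 'a \<Rightarrow> 'a) \<Rightarrow> ('a \<Rightarrow> 'a) \<Rightarrow> bool" where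
  "hom_lie sm b \<alpha> \<longleftrightarrow> bilinear_op sm b \<and> Vector_Spaces.linear sm sm \<alpha> \<and>
     (\<forall>x y. b x y = - b y x) \<and>
     (\<forall>x y z. b (b x y) (\<alpha> z) + b (b y z) (\<alpha> x) + b (b z x) (\<alpha> y) = 0)"

definition hom_GD_bialgebra ::
  "(complex \<Rightarrow> 'a::ab_group_add \<Rightarrow> 'a) \<Rightarrow> ('a \<Rightarrow> 'a \<Rightarrow> 'a) \<Rightarrow> ('a \<Rightarrow> 'a \<Rightarrow> 'a) \<Rightarrow> ('a \<Rightarrow> 'a) \<Rightarrow> bool" where
  "hom_GD_bialgebra sm b c \<alpha> \<longleftrightarrow> hom_lie sm b \<alpha> \<and> hom_novikov sm c \<alpha> \<and>
     (\<forall>x y z. b (c x y) (\<alpha> z) - b (c x z) (\<alpha> y) + c (b x y) (\<alpha> z) - c (b x z) (\<alpha> y)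
        - c (\<alpha> x) (b y z) = 0)"

end

theory Submission
  imports Defs
begin

text \<open>For \<open>\<alpha> = id\<close> this is the classical fact that a commutative associative algebra
with a derivation \<open>D\<close> carries the Novikov product \<open>x D(y) + \<lambda> x y\<close> and the Witt-type
bracket \<open>x D(y) - y D(x)\<close>, and that together they form a Gel'fand-Dorfman bialgebra.
The general case is its Yau twist: since \<open>\<alpha>\<close> is multiplicative and commutes with \<open>D\<close>,
it is an endomorphism of both operations, and composing the operations of a Gel'fand-Dorfman
bialgebra with such an endomorphism turns each defining identity into \<open>\<alpha> \<circ> \<alpha>\<close>
applied to the untwisted one.\<close>

lemma linear_simps:
  assumes "Vector_Spaces.linear sm sm f"
  shows "f (x + y) = f x + f y" "f (sm c x) = sm c (f x)" "f (x - y) = f x - f y"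
    "f (- x) = - f x" "f 0 = 0"
proof -
  interpret module_hom sm sm f using assms by (simp add: linear_iff_module_hom)
  show "f (x + y) = f x + f y" "f (sm c x) = sm c (f x)" "f (x - y) = f x - f y"
    "f (- x) = - f x" "f 0 = 0" by (simp_all add: add scale diff neg)
qed

lemma bilinear_op_compose:
  assumes "bilinear_op sm b" and "Vector_Spaces.linear sm sm \<alpha>"
  shows "bilinear_op sm (\<lambda>x y. \<alpha> (b x y))"
proof -
  have "Vector_Spaces.linear sm sm (\<alpha> \<circ> f)" if "Vector_Spaces.linear sm sm f" for f
    using that assms(2) by (rule Vector_Spaces.linear_compose)
  then show ?thesis
    using assms(1) by (simp add: bilinear_op_def comp_def)
qed

lemma hom_lie_yau_twist:
  assumes lie: "hom_lie sm b id" and lin: "Vector_Spaces.linear sm sm \<alpha>"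
    and mult: "\<And>x y. \<alpha> (b x y) = b (\<alpha> x) (\<alpha> y)"
  shows "hom_lie sm (\<lambda>x y. \<alpha> (b x y)) \<alpha>"
proof -
  have bil: "bilinear_op sm b" and skew: "\<And>x y. b x y = - b y x"
    and jacobi: "\<And>x y z. b (b x y) z + b (b y z) x + b (b z x) y = 0"
    using lie unfolding hom_lie_def id_apply by blast+
  have twisted_jacobi:
    "\<alpha> (b (\<alpha> (b x y)) (\<alpha> z)) + \<alpha> (b (\<alpha> (b y z)) (\<alpha> x)) + \<alpha> (b (\<alpha> (b z x)) (\<alpha> y)) = 0"
    for x y z
    using arg_cong[OF jacobi[of x y z], of "\<lambda>t. \<alpha> (\<alpha> t)"]
    by (simp add: mult linear_simps[OF lin])
  have twisted_skew: "\<alpha> (b x y) = - \<alpha> (b y x)" for x y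
    by (subst skew) (simp add: linear_simps[OF lin])
  show ?thesis
    unfolding hom_lie_def
    by (intro conjI allI bilinear_op_compose[OF bil lin] lin)
      (rule twisted_skew, rule twisted_jacobi)
qed

lemma hom_novikov_yau_twist:
  assumes nov: "hom_novikov sm c id" and lin: "Vector_Spaces.linear sm sm \<alpha>"
    and mult: "\<And>x y. \<alpha> (c x y) = c (\<alpha> x) (\<alpha> y)"
  shows "hom_novikov sm (\<lambda>x y. \<alpha> (c x y)) \<alpha>"
proof -
  have bil: "bilinear_op sm c"
    and left_sym: "\<And>x y z. c (c x y) z - c x (c y z) = c (c y x) z - c y (c x z)"
    and right_comm: "\<And>x y z. c (c x y) z = c (c x z) y"
    using nov unfolding hom_novikov_def id_apply by blast+
  have twisted_left_sym: "\<alpha> (c (\<alpha> (c x y)) (\<alpha> z)) - \<alpha> (c (\<alpha> x) (\<alpha> (c y z)))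
      = \<alpha> (c (\<alpha> (c y x)) (\<alpha> z)) - \<alpha> (c (\<alpha> y) (\<alpha> (c x z)))" for x y z
    using arg_cong[OF left_sym[of x y z], of "\<lambda>t. \<alpha> (\<alpha> t)"]
    by (simp add: mult linear_simps[OF lin])
  have twisted_right_comm: "\<alpha> (c (\<alpha> (c x y)) (\<alpha> z)) = \<alpha> (c (\<alpha> (c x z)) (\<alpha> y))"
    for x y z
    by (simp add: mult right_comm)
  show ?thesis
    unfolding hom_novikov_def
    by (intro conjI allI bilinear_op_compose[OF bil lin] lin)
      (rule twisted_left_sym, rule twisted_right_comm)
qed

lemma hom_GD_bialgebra_yau_twist:
  assumes gd: "hom_GD_bialgebra sm b c id" and lin: "Vector_Spaces.linear sm sm \<alpha>"
    and mult_b: "\<And>x y. \<alpha> (b x y) = b (\<alpha> x) (\<alpha> y)"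
    and mult_c: "\<And>x y. \<alpha> (c x y) = c (\<alpha> x) (\<alpha> y)"
  shows "hom_GD_bialgebra sm (\<lambda>x y. \<alpha> (b x y)) (\<lambda>x y. \<alpha> (c x y)) \<alpha>"
proof -
  have lie: "hom_lie sm b id" and nov: "hom_novikov sm c id"
    and compat: "\<And>x y z. b (c x y) z - b (c x z) y + c (b x y) z - c (b x z) y - c x (b y z) = 0"
    using gd unfolding hom_GD_bialgebra_def id_apply by blast+
  have twisted_compat:
    "\<alpha> (b (\<alpha> (c x y)) (\<alpha> z)) - \<alpha> (b (\<alpha> (c x z)) (\<alpha> y)) + \<alpha> (c (\<alpha> (b x y)) (\<alpha> z))
      - \<alpha> (c (\<alpha> (b x z)) (\<alpha> y)) - \<alpha> (c (\<alpha> x) (\<alpha> (b y z))) = 0" for x y z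
    using arg_cong[OF compat[of x y z], of "\<lambda>t. \<alpha> (\<alpha> t)"]
    by (simp add: mult_b mult_c linear_simps[OF lin])
  show ?thesis
    unfolding hom_GD_bialgebra_def
  proof (intro conjI allI)
    \<comment> \<open>explicit instances: resolving \<open>mult_b\<close> against a schematic \<open>\<alpha> (b x y)\<close> does not terminate\<close>
    show "hom_lie sm (\<lambda>x y. \<alpha> (b x y)) \<alpha>"
      by (rule hom_lie_yau_twist[where b=b and \<alpha>=\<alpha>, OF lie lin mult_b])
    show "hom_novikov sm (\<lambda>x y. \<alpha> (c x y)) \<alpha>"
      by (rule hom_novikov_yau_twist[where c=c and \<alpha>=\<alpha>, OF nov lin mult_c])
  qed (rule twisted_compat)
qed

locale differential_comm_algebra = vector_space sm
  for sm :: "complex \<Rightarrow> 'a::ab_group_add \<Rightarrow> 'a" +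
  fixes m :: "'a \<Rightarrow> 'a \<Rightarrow> 'a" and D :: "'a \<Rightarrow> 'a"
  assumes comm_assoc: "comm_assoc_algebra sm m" and derivation: "derivation sm m D"
begin

definition witt_bracket :: "'a \<Rightarrow> 'a \<Rightarrow> 'a"
  where "witt_bracket x y = m x (D y) - m y (D x)"

definition novikov_prod :: "complex \<Rightarrow> 'a \<Rightarrow> 'a \<Rightarrow> 'a"
  where "novikov_prod lam x y = m x (D y) + sm lam (m x y)"

lemma linear_mult_left: "Vector_Spaces.linear sm sm (\<lambda>x. m x y)"
  and linear_mult_right: "Vector_Spaces.linear sm sm (m x)"
  and mult_commute: "m x y = m y x"
  and mult_assoc: "m (m x y) z = m x (m y z)"
  using comm_assoc by (auto simp: comm_assoc_algebra_def bilinear_op_def)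

lemma mult_left_commute: "m x (m y z) = m y (m x z)"
  by (metis mult_assoc mult_commute)

lemma linear_D: "Vector_Spaces.linear sm sm D"
  and D_mult: "D (m x y) = m (D x) y + m x (D y)"
  using derivation by (auto simp: derivation_def)

lemmas algebra_normalize = linear_simps[OF linear_mult_left] linear_simps[OF linear_mult_right]
  linear_simps[OF linear_D] D_mult mult_assoc mult_commute mult_left_commute

lemma bilinear_witt_bracket: "bilinear_op sm witt_bracket"
  unfolding bilinear_op_def Vector_Spaces.linear_iff witt_bracket_def
  by (simp add: algebra_normalize algebra_simps vector_space_axioms)

lemma bilinear_novikov_prod: "bilinear_op sm (novikov_prod lam)"
  unfolding bilinear_op_def Vector_Spaces.linear_iff novikov_prod_def
  by (simp add: algebra_normalize algebra_simps scale_left_commute vector_space_axioms)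

lemma witt_bracket_jacobi:
  "witt_bracket (witt_bracket x y) z + witt_bracket (witt_bracket y z) x
     + witt_bracket (witt_bracket z x) y = 0"
  by (simp add: witt_bracket_def algebra_normalize algebra_simps)

lemma hom_lie_witt_bracket: "hom_lie sm witt_bracket id"
  unfolding hom_lie_def
  by (simp add: bilinear_witt_bracket linear_id witt_bracket_jacobi) (simp add: witt_bracket_def)

text \<open>The associator depends on \<open>x\<close> and \<open>y\<close> only through \<open>m x y\<close>, which gives
left-symmetry.\<close>

lemma novikov_prod_associator:
  "novikov_prod lam (novikov_prod lam x y) z - novikov_prod lam x (novikov_prod lam y z)
     = - m (m x y) (D (D z) + sm lam (D z))"
  by (simp add: novikov_prod_def algebra_normalize algebra_simps scale_left_commute)

lemma novikov_prod_right_commute: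
  "novikov_prod lam (novikov_prod lam x y) z = novikov_prod lam (novikov_prod lam x z) y"
  by (simp add: novikov_prod_def algebra_normalize algebra_simps scale_left_commute)

lemma hom_novikov_novikov_prod: "hom_novikov sm (novikov_prod lam) id"
  unfolding hom_novikov_def
  by (simp add: bilinear_novikov_prod linear_id novikov_prod_associator
      novikov_prod_right_commute mult_commute)

lemma GD_compatibility:
  "witt_bracket (novikov_prod lam x y) z - witt_bracket (novikov_prod lam x z) y
     + novikov_prod lam (witt_bracket x y) z - novikov_prod lam (witt_bracket x z) y
     - novikov_prod lam x (witt_bracket y z) = 0"
  by (simp add: witt_bracket_def novikov_prod_def algebra_normalize algebra_simps scale_left_commute)

lemma hom_GD_bialgebra_witt_novikov: "hom_GD_bialgebra sm witt_bracket (novikov_prod lam) id"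
  unfolding hom_GD_bialgebra_def
  using hom_lie_witt_bracket hom_novikov_novikov_prod GD_compatibility by simp

context
  fixes \<alpha> :: "'a \<Rightarrow> 'a"
  assumes endo: "algebra_endomorphism sm m \<alpha>" and commute: "D \<circ> \<alpha> = \<alpha> \<circ> D"
begin

lemma linear_endo: "Vector_Spaces.linear sm sm \<alpha>"
  and endo_mult: "\<alpha> (m x y) = m (\<alpha> x) (\<alpha> y)"
  using endo by (auto simp: algebra_endomorphism_def)

lemma endo_D_commute: "\<alpha> (D x) = D (\<alpha> x)"
  using commute by (metis comp_apply)

lemma endo_witt_bracket: "\<alpha> (witt_bracket x y) = witt_bracket (\<alpha> x) (\<alpha> y)"
  by (simp add: witt_bracket_def linear_simps[OF linear_endo] endo_mult endo_D_commute)

lemma endo_novikov_prod: "\<alpha> (novikov_prod lam x y) = novikov_prod lam (\<alpha> x) (\<alpha> y)"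
  by (simp add: novikov_prod_def linear_simps[OF linear_endo] endo_mult endo_D_commute)

end

end

theorem corollary3p10:
  fixes sm :: "complex \<Rightarrow> 'a::ab_group_add \<Rightarrow> 'a"
    and m :: "'a \<Rightarrow> 'a \<Rightarrow> 'a" and \<alpha> D :: "'a \<Rightarrow> 'a" and lam :: complex
  assumes "vector_space sm"
    and "comm_assoc_algebra sm m"
    and "algebra_endomorphism sm m \<alpha>"
    and "derivation sm m D"
    and "D \<circ> \<alpha> = \<alpha> \<circ> D"
  shows "hom_GD_bialgebra sm
           (\<lambda>x y. \<alpha> (m x (D y)) - \<alpha> (m y (D x)))
           (\<lambda>x y. \<alpha> (m x (D y)) + sm lam (\<alpha> (m x y)))
           \<alpha>"
proof -
  interpret differential_comm_algebra sm m D
    using assms(1,2,4) by (simp add: differential_comm_algebra_def differential_comm_algebra_axioms_def)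
  have lin: "Vector_Spaces.linear sm sm \<alpha>"
    using linear_endo[OF assms(3,5)] .
  have "hom_GD_bialgebra sm (\<lambda>x y. \<alpha> (witt_bracket x y)) (\<lambda>x y. \<alpha> (novikov_prod lam x y)) \<alpha>"
    by (rule hom_GD_bialgebra_yau_twist[where b = witt_bracket and c = "novikov_prod lam" and \<alpha> = \<alpha>,
          OF hom_GD_bialgebra_witt_novikov lin
             endo_witt_bracket[OF assms(3,5)] endo_novikov_prod[OF assms(3,5)]])
  then show ?thesis
    by (simp add: witt_bracket_def novikov_prod_def linear_simps[OF lin])
qed

end
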